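(* Let $S$ be a nonempty product-free set of positive integers (i.e. there are no $a,b,c\in S$, not necessarily distinct, with $ab=c$), and let $a$ be the least element of $S$. Then the upper asymptotic density of $S$ satisfies $$ \limsup_{x\to\infty}\frac{|S\cap[1,x]|}{x} \le 1-\frac{1}{2a}. $$ More precisely, $|S\cap[1,x]|\le x-\frac12\lfloor x/a\rfloor$ for every real $x\ge a$. *)

theory Defs
  imports "HOL-Analysis.Analysis"
begin

definition product_free :: "nat set \<Rightarrow> bool" where
  "product_free S \<longleftrightarrow> (\<forall>a\<in>S. \<forall>b\<in>S. \<forall>c\<in>S. a * b \<noteq> c)"

definition count_upto :: "nat set \<Rightarrow> real \<Rightarrow> nat" where
  "count_upto S x = card {n\<in>S. 1 \<le> n \<and> real n \<le> x}"

end

theory Submission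
  imports Defs "HOL-Real_Asymp.Real_Asymp"
begin

(* Let a be the least element of the product-free set S and let
   m = floor(x/a), n = floor(x).  Every k in {1..m} yields a non-element of S
   below n: if k is not in S it is k itself, and if k is in S then k*a is not in
   S by product-freeness, while k*a <= m*a <= n.  Both maps are injective, so
   m <= 2 * |{1..n} - S|, i.e. |{1..n} \<inter> S| <= n - m/2.
   The file first proves this discrete inequality, then translates it to the
   real counting function (count_upto S x = |{1..floor x} \<inter> S|), and finally
   shows by a general limit argument that any counting function obeying the
   bound c(x) <= x - floor(x/a)/2 has c(x)/x with limsup at most 1 - 1/(2a). *)

lemma product_free_mult_notin:
  assumes "product_free S" and "a \<in> S" and "k \<in> S"
  shows "k * a \<notin> S"
  using assms unfolding product_free_def by blast

text \<open>The heart of the argument: the integers \<open>1..m\<close> with \<open>m * a \<le> n\<close> produce,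
  twice over, injective families of non-elements of \<open>S\<close> in \<open>{1..n}\<close>.\<close>

lemma many_non_members:
  fixes S :: "nat set" and a m n :: nat
  assumes pf: "product_free S" and aS: "a \<in> S" and a0: "a > 0" and ma: "m * a \<le> n"
  shows "m \<le> 2 * card ({1..n} - S)"
proof -
  let ?M = "{1..n} - S"
  have "m \<le> m * a" using a0 by simp
  then have "m \<le> n" using ma by linarith
  then have "{1..m} - S \<subseteq> ?M" by auto
  then have outside: "card ({1..m} - S) \<le> card ?M"
    by (intro card_mono) auto
  have image_sub: "(\<lambda>k. k * a) ` ({1..m} \<inter> S) \<subseteq> ?M"
  proof
    fix y assume "y \<in> (\<lambda>k. k * a) ` ({1..m} \<inter> S)"
    then obtain k where k: "k \<in> {1..m}" "k \<in> S" and y: "y = k * a" by auto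
    have "k * a \<le> m * a" using k by simp
    then have "y \<le> n" using ma y by linarith
    moreover have "1 \<le> y" using k a0 y by simp
    ultimately have "y \<in> {1..n}" by simp
    moreover have "y \<notin> S" using product_free_mult_notin[OF pf aS k(2)] y by simp
    ultimately show "y \<in> ?M" by simp
  qed
  have "inj_on (\<lambda>k. k * a) ({1..m} \<inter> S)"
    using a0 by (auto simp: inj_on_def)
  then have "card ({1..m} \<inter> S) = card ((\<lambda>k. k * a) ` ({1..m} \<inter> S))"
    by (simp add: card_image)
  also have "\<dots> \<le> card ?M"
    using image_sub by (intro card_mono) auto
  finally have inside: "card ({1..m} \<inter> S) \<le> card ?M" .
  have "m = card ({1..m} - S) + card ({1..m} \<inter> S)"
    using card_Int_Diff[of "{1..m}" S] by simp
  then show ?thesis using outside inside by linarith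
qed

lemma members_upto_bound:
  fixes S :: "nat set" and a m n :: nat
  assumes "product_free S" and "a \<in> S" and "a > 0" and "m * a \<le> n"
  shows "2 * card ({1..n} \<inter> S) + m \<le> 2 * n"
proof -
  have "card ({1..n} \<inter> S) + card ({1..n} - S) = n"
    using card_Int_Diff[of "{1..n}" S] by simp
  then show ?thesis using many_non_members[OF assms] by linarith
qed

lemma count_upto_floor:
  assumes "x \<ge> 0"
  shows "count_upto S x = card ({1..nat \<lfloor>x\<rfloor>} \<inter> S)"
proof -
  have "real k \<le> x \<longleftrightarrow> k \<le> nat \<lfloor>x\<rfloor>" for k :: nat
  proof
    assume "real k \<le> x"
    then show "k \<le> nat \<lfloor>x\<rfloor>" by (rule le_nat_floor)
  next
    assume "k \<le> nat \<lfloor>x\<rfloor>"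
    then have "int k \<le> \<lfloor>x\<rfloor>" using assms by linarith
    then have "real_of_int (int k) \<le> x" by (simp add: le_floor_iff)
    then show "real k \<le> x" by simp
  qed
  then have "{k\<in>S. 1 \<le> k \<and> real k \<le> x} = {1..nat \<lfloor>x\<rfloor>} \<inter> S"
    unfolding set_eq_iff mem_Collect_eq Int_iff atLeastAtMost_iff by blast
  then show ?thesis unfolding count_upto_def by simp
qed

lemma count_upto_bound:
  fixes S :: "nat set" and a :: nat and x :: real
  assumes pf: "product_free S" and aS: "a \<in> S" and a0: "a > 0" and x0: "x \<ge> 0"
  shows "real (count_upto S x) \<le> x - (1/2) * real_of_int \<lfloor>x / real a\<rfloor>"
proof -
  define n where "n = nat \<lfloor>x\<rfloor>"
  define m where "m = nat \<lfloor>x / real a\<rfloor>"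
  have m_floor: "real m = real_of_int \<lfloor>x / real a\<rfloor>" unfolding m_def using x0 a0 by simp
  have "real m * real a \<le> x"
    using m_floor a0 by (simp add: pos_le_divide_eq[symmetric])
  then have "m * a \<le> n" unfolding n_def by (metis le_nat_floor of_nat_mult)
  then have "2 * card ({1..n} \<inter> S) + m \<le> 2 * n"
    by (rule members_upto_bound[OF pf aS a0])
  then have "2 * real (card ({1..n} \<inter> S)) + real m \<le> 2 * real n" by linarith
  moreover have "real n \<le> x" unfolding n_def using x0 by simp
  ultimately show ?thesis
    unfolding count_upto_floor[OF x0] m_floor[symmetric] n_def by linarith
qed

text \<open>Asymptotic consequence: any function obeying the bound of the previous lemma
  has upper density at most \<open>1 - 1/(2a)\<close>, since \<open>c(x)/x \<le> 1 - 1/(2a) + 1/(2x)\<close>.\<close>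

lemma Limsup_density_bound:
  fixes c :: "real \<Rightarrow> real" and a :: real
  assumes a0: "a > 0" and bound: "\<And>x. x \<ge> 0 \<Longrightarrow> c x \<le> x - (1/2) * real_of_int \<lfloor>x / a\<rfloor>"
  shows "Limsup at_top (\<lambda>x. ereal (c x / x)) \<le> ereal (1 - 1 / (2 * a))"
proof -
  let ?g = "\<lambda>x::real. 1 - 1 / (2 * a) + 1 / (2 * x)"
  have "eventually (\<lambda>x. ereal (c x / x) \<le> ereal (?g x)) at_top"
    using eventually_gt_at_top[of 0]
  proof eventually_elim
    case (elim x)
    have "x / a - 1 \<le> real_of_int \<lfloor>x / a\<rfloor>" by linarith
    then have "(1/2) * (x / a - 1) \<le> (1/2) * real_of_int \<lfloor>x / a\<rfloor>" by (rule mult_left_mono) simp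
    moreover have "c x \<le> x - (1/2) * real_of_int \<lfloor>x / a\<rfloor>" using bound elim by simp
    ultimately have "c x \<le> x - (1/2) * (x / a - 1)" by linarith
    then have "c x / x \<le> (x - (1/2) * (x / a - 1)) / x"
      using elim by (intro divide_right_mono) auto
    also have "\<dots> = ?g x" using elim a0 by (simp add: field_simps)
    finally show ?case by simp
  qed
  then have "Limsup at_top (\<lambda>x. ereal (c x / x)) \<le> Limsup at_top (\<lambda>x. ereal (?g x))"
    by (rule Limsup_mono)
  also have "\<dots> = ereal (1 - 1 / (2 * a))"
  proof (rule lim_imp_Limsup)
    have "(?g \<longlongrightarrow> 1 - 1 / (2 * a) + 0) at_top"
      by (intro tendsto_intros) real_asymp
    then show "((\<lambda>x. ereal (?g x)) \<longlongrightarrow> ereal (1 - 1 / (2 * a))) at_top"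
      by (simp add: tendsto_ereal)
  qed simp
  finally show ?thesis .
qed

theorem mainTheorem6:
  fixes S :: "nat set"
  assumes "S \<noteq> {}" and "\<forall>n\<in>S. n > 0" and "product_free S"
  defines "a \<equiv> (LEAST n. n \<in> S)"
  shows "Limsup at_top (\<lambda>x::real. ereal (real (count_upto S x) / x))
           \<le> ereal (1 - 1 / (2 * real a))
         \<and> (\<forall>x::real. x \<ge> real a \<longrightarrow>
           real (count_upto S x) \<le> x - (1/2) * real_of_int \<lfloor>x / real a\<rfloor>)"
proof -
  have aS: "a \<in> S" unfolding a_def using assms(1) by (metis LeastI ex_in_conv)
  have a0: "a > 0" using aS assms(2) by auto
  have bound: "\<And>x. x \<ge> 0 \<Longrightarrow>
      real (count_upto S x) \<le> x - (1/2) * real_of_int \<lfloor>x / real a\<rfloor>"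
    using count_upto_bound[OF assms(3) aS a0] .
  have "Limsup at_top (\<lambda>x::real. ereal (real (count_upto S x) / x))
      \<le> ereal (1 - 1 / (2 * real a))"
    using Limsup_density_bound[of "real a", OF _ bound] a0 by simp
  then show ?thesis using bound a0 by auto
qed

end
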